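(* Let $(M,g)$ be a semi-regular semi-Riemannian manifold. Then the Riemann curvature $R$ is a smooth tensor field of type $(0,4)$ on $M$, i.e. $R:\mathfrak{X}(M)^4\to C^\infty(M)$ is $C^\infty(M)$-linear in each of its four arguments and takes smooth values.
   Context: A singular semi-Riemannian manifold $(M,g)$ is a smooth $n$-manifold $M$ with a smooth symmetric bilinear form $g$ on $TM$, possibly degenerate and with signature possibly varying from point to point. $\mathfrak X(M)$ denotes smooth vector fields, $C^\infty(M)$ smooth functions. For $u\in T_pM$ let $u^\flat\in T_p^*M$, $u^\flat(v)=g(u,v)$. The radical is $T^\circ_pM=\{u\in T_pM: u^\flat=0\}$; the radical-annihilator space is $T^\bullet_pM=\{u^\flat:u\in T_pM\}\subseteq T^*_pM$ (the annihilator of $T^\circ_pM$). On $T^\bullet_pM$ there is a well-defined nondegenerate inner product $\langle\langle u^\flat,v^\flat\rangle\rangle:=g(u,v)$. $\mathcal A^\bullet(M)$ denotes the smooth $1$-forms $\omega$ with $\omega_p\in T^\bullet_pM$ for all $p$. The Koszul form is $\mathcal K(X,Y,Z)=\tfrac12\{Xg(Y,Z)+Yg(Z,X)-Zg(X,Y)-g(X,[Y,Z])+g(Y,[Z,X])+g(Z,[X,Y])\}$, and the lower covariant derivative is the $1$-form $\nabla^\flat_XY:=\mathcal K(X,Y,\cdot)$. $(M,g)$ is radical-stationary if $\nabla^\flat_XY\in\mathcal A^\bullet(M)$ for all $X,Y\in\mathfrak X(M)$. On a radical-stationary manifold, for $\omega\in\mathcal A^\bullet(M)$ and $X\in\mathfrak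 X(M)$, the covariant derivative $\nabla_X\omega$ is the section of $T^*M$ given by $(\nabla_X\omega)(Y)=X(\omega(Y))-\langle\langle\nabla^\flat_XY,\omega\rangle\rangle$ (evaluated pointwise). Let $\mathcal A^\bullet_d(M)=\{\omega\in\mathcal A^\bullet(M):\nabla_X\omega\in\mathcal A^\bullet(M)\text{ (in particular smooth) for all }X\in\mathfrak X(M)\}$. $(M,g)$ is semi-regular if $\nabla^\flat_XY\in\mathcal A^\bullet_d(M)$ for all $X,Y\in\mathfrak X(M)$ (semi-regular implies radical-stationary). The Riemann curvature is $R(X,Y,Z,T):=(\nabla_X(\nabla^\flat_YZ))(T)-(\nabla_Y(\nabla^\flat_XZ))(T)-(\nabla^\flat_{[X,Y]}Z)(T)$. *)

theory Defs
  imports "HOL-Analysis.Analysis"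
begin

text \<open>C-infinity: continuous, and all partial derivatives exist and are again C-infinity
  (greatest fixed point, i.e. partial derivatives of all orders exist and are continuous).\<close>
coinductive smooth_on :: "'e::euclidean_space set \<Rightarrow> ('e \<Rightarrow> real) \<Rightarrow> bool" for S where
  smooth_onI: "continuous_on S f \<Longrightarrow>
    (\<forall>i\<in>Basis. \<exists>f'. (\<forall>x\<in>S. ((\<lambda>t. f (x + t *\<^sub>R i)) has_real_derivative f' x) (at 0))
                      \<and> smooth_on S f') \<Longrightarrow> smooth_on S f"

definition smooth_map_on :: "'e::euclidean_space set \<Rightarrow> ('e \<Rightarrow> 'f::euclidean_space) \<Rightarrow> bool" where
  "smooth_map_on S h \<longleftrightarrow> (\<forall>i\<in>Basis. smooth_on S (\<lambda>x. h x \<bullet> i))"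

definition smooth_atlas :: "'a set \<Rightarrow> ('a set \<times> ('a \<Rightarrow> 'e::euclidean_space)) set \<Rightarrow> bool" where
  "smooth_atlas M A \<longleftrightarrow>
     (\<forall>(U,\<phi>)\<in>A. U \<subseteq> M \<and> inj_on \<phi> U \<and> open (\<phi> ` U)) \<and>
     M = \<Union>(fst ` A) \<and>
     (\<forall>(U,\<phi>)\<in>A. \<forall>(V,\<psi>)\<in>A. open (\<phi> ` (U \<inter> V)) \<and>
          smooth_map_on (\<phi> ` (U \<inter> V)) (\<psi> \<circ> inv_into U \<phi>))"

definition manifold_topology :: "'a set \<Rightarrow> ('a set \<times> ('a \<Rightarrow> 'e::euclidean_space)) set \<Rightarrow> 'a topology" where
  "manifold_topology M A = topology (\<lambda>W. W \<subseteq> M \<and> (\<forall>(U,\<phi>)\<in>A. open (\<phi> ` (W \<inter> U))))"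

definition smooth_manifold :: "'a set \<Rightarrow> ('a set \<times> ('a \<Rightarrow> 'e::euclidean_space)) set \<Rightarrow> bool" where
  "smooth_manifold M A \<longleftrightarrow> smooth_atlas M A \<and>
     Hausdorff_space (manifold_topology M A) \<and> second_countable (manifold_topology M A)"

definition smooth_funs :: "'a set \<Rightarrow> ('a set \<times> ('a \<Rightarrow> 'e::euclidean_space)) set \<Rightarrow> ('a \<Rightarrow> real) set" where
  "smooth_funs M A = {f. (\<forall>(U,\<phi>)\<in>A. smooth_on (\<phi> ` U) (f \<circ> inv_into U \<phi>)) \<and> (\<forall>p. p \<notin> M \<longrightarrow> f p = 0)}"

section \<open>Vector fields as derivations of C-infinity(M)\<close>

type_synonym 'a vf = "('a \<Rightarrow> real) \<Rightarrow> ('a \<Rightarrow> real)"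

definition vector_fields :: "'a set \<Rightarrow> ('a set \<times> ('a \<Rightarrow> 'e::euclidean_space)) set \<Rightarrow> 'a vf set" where
  "vector_fields M A = {D.
     (\<forall>f\<in>smooth_funs M A. D f \<in> smooth_funs M A) \<and>
     (\<forall>f. f \<notin> smooth_funs M A \<longrightarrow> D f = (\<lambda>_. 0)) \<and>
     (\<forall>f\<in>smooth_funs M A. \<forall>h\<in>smooth_funs M A. \<forall>a b::real.
         D (\<lambda>p. a * f p + b * h p) = (\<lambda>p. a * D f p + b * D h p)) \<and>
     (\<forall>f\<in>smooth_funs M A. \<forall>h\<in>smooth_funs M A.
         D (\<lambda>p. f p * h p) = (\<lambda>p. f p * D h p + h p * D f p))}"

definition vf_add :: "'a vf \<Rightarrow> 'a vf \<Rightarrow> 'a vf" where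
  "vf_add X Y = (\<lambda>h p. X h p + Y h p)"

definition vf_scale :: "('a \<Rightarrow> real) \<Rightarrow> 'a vf \<Rightarrow> 'a vf" where
  "vf_scale f X = (\<lambda>h p. f p * X h p)"

definition lie_bracket :: "'a vf \<Rightarrow> 'a vf \<Rightarrow> 'a vf" where
  "lie_bracket X Y = (\<lambda>h p. X (Y h) p - Y (X h) p)"

text \<open>A smooth symmetric (possibly degenerate) bilinear form on TM, as a symmetric
  C-infinity(M)-bilinear map on vector fields with smooth values.\<close>
definition smooth_sym_form :: "'a set \<Rightarrow> ('a set \<times> ('a \<Rightarrow> 'e::euclidean_space)) set \<Rightarrow>
    ('a vf \<Rightarrow> 'a vf \<Rightarrow> 'a \<Rightarrow> real) \<Rightarrow> bool" where
  "smooth_sym_form M A g \<longleftrightarrow>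
     (\<forall>X\<in>vector_fields M A. \<forall>Y\<in>vector_fields M A.
        g X Y \<in> smooth_funs M A \<and> g X Y = g Y X) \<and>
     (\<forall>f\<in>smooth_funs M A. \<forall>X\<in>vector_fields M A. \<forall>X'\<in>vector_fields M A. \<forall>Y\<in>vector_fields M A.
        g (vf_add (vf_scale f X) X') Y = (\<lambda>p. f p * g X Y p + g X' Y p))"

type_synonym 'a form1 = "'a vf \<Rightarrow> 'a \<Rightarrow> real"

definition smooth_1forms :: "'a set \<Rightarrow> ('a set \<times> ('a \<Rightarrow> 'e::euclidean_space)) set \<Rightarrow> 'a form1 set" where
  "smooth_1forms M A = {\<omega>.
     (\<forall>X\<in>vector_fields M A. \<omega> X \<in> smooth_funs M A) \<and>
     (\<forall>f\<in>smooth_funs M A. \<forall>X\<in>vector_fields M A. \<forall>X'\<in>vector_fields M A.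
        \<omega> (vf_add (vf_scale f X) X') = (\<lambda>p. f p * \<omega> X p + \<omega> X' p))}"

text \<open>omega_p lies in the radical-annihilator T^bullet_p M, i.e. omega_p = u^flat for some
  u in T_p M (realised as the value at p of a vector field).\<close>
definition in_annih_at :: "'a set \<Rightarrow> ('a set \<times> ('a \<Rightarrow> 'e::euclidean_space)) set \<Rightarrow>
    ('a vf \<Rightarrow> 'a vf \<Rightarrow> 'a \<Rightarrow> real) \<Rightarrow> 'a form1 \<Rightarrow> 'a \<Rightarrow> bool" where
  "in_annih_at M A g \<omega> p \<longleftrightarrow> (\<exists>U\<in>vector_fields M A. \<forall>Y\<in>vector_fields M A. \<omega> Y p = g U Y p)"

definition annih_forms :: "'a set \<Rightarrow> ('a set \<times> ('a \<Rightarrow> 'e::euclidean_space)) set \<Rightarrow>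
    ('a vf \<Rightarrow> 'a vf \<Rightarrow> 'a \<Rightarrow> real) \<Rightarrow> 'a form1 set" where
  "annih_forms M A g = {\<omega>\<in>smooth_1forms M A. \<forall>p\<in>M. in_annih_at M A g \<omega> p}"

text \<open>The inner product on T^bullet_p M: for omega_p = u^flat, tau_p = v^flat, it is g(u,v).\<close>
definition annih_inner :: "'a set \<Rightarrow> ('a set \<times> ('a \<Rightarrow> 'e::euclidean_space)) set \<Rightarrow>
    ('a vf \<Rightarrow> 'a vf \<Rightarrow> 'a \<Rightarrow> real) \<Rightarrow> 'a form1 \<Rightarrow> 'a form1 \<Rightarrow> 'a \<Rightarrow> real" where
  "annih_inner M A g \<omega> \<tau> p =
     g (SOME U. U \<in> vector_fields M A \<and> (\<forall>Y\<in>vector_fields M A. \<omega> Y p = g U Y p))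
       (SOME V. V \<in> vector_fields M A \<and> (\<forall>Y\<in>vector_fields M A. \<tau> Y p = g V Y p)) p"

definition koszul :: "('a vf \<Rightarrow> 'a vf \<Rightarrow> 'a \<Rightarrow> real) \<Rightarrow> 'a vf \<Rightarrow> 'a vf \<Rightarrow> 'a vf \<Rightarrow> 'a \<Rightarrow> real" where
  "koszul g X Y Z = (\<lambda>p. (1/2) * (X (g Y Z) p + Y (g Z X) p - Z (g X Y) p
      - g X (lie_bracket Y Z) p + g Y (lie_bracket Z X) p + g Z (lie_bracket X Y) p))"

definition lower_nabla :: "('a vf \<Rightarrow> 'a vf \<Rightarrow> 'a \<Rightarrow> real) \<Rightarrow> 'a vf \<Rightarrow> 'a vf \<Rightarrow> 'a form1" where
  "lower_nabla g X Y = (\<lambda>Z. koszul g X Y Z)"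

definition radical_stationary :: "'a set \<Rightarrow> ('a set \<times> ('a \<Rightarrow> 'e::euclidean_space)) set \<Rightarrow>
    ('a vf \<Rightarrow> 'a vf \<Rightarrow> 'a \<Rightarrow> real) \<Rightarrow> bool" where
  "radical_stationary M A g \<longleftrightarrow>
     (\<forall>X\<in>vector_fields M A. \<forall>Y\<in>vector_fields M A. lower_nabla g X Y \<in> annih_forms M A g)"

definition cov_deriv :: "'a set \<Rightarrow> ('a set \<times> ('a \<Rightarrow> 'e::euclidean_space)) set \<Rightarrow>
    ('a vf \<Rightarrow> 'a vf \<Rightarrow> 'a \<Rightarrow> real) \<Rightarrow> 'a vf \<Rightarrow> 'a form1 \<Rightarrow> 'a form1" where
  "cov_deriv M A g X \<omega> = (\<lambda>Y p. if p \<in> M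
      then X (\<omega> Y) p - annih_inner M A g (lower_nabla g X Y) \<omega> p else 0)"

definition annih_d_forms :: "'a set \<Rightarrow> ('a set \<times> ('a \<Rightarrow> 'e::euclidean_space)) set \<Rightarrow>
    ('a vf \<Rightarrow> 'a vf \<Rightarrow> 'a \<Rightarrow> real) \<Rightarrow> 'a form1 set" where
  "annih_d_forms M A g = {\<omega>\<in>annih_forms M A g.
      \<forall>X\<in>vector_fields M A. cov_deriv M A g X \<omega> \<in> annih_forms M A g}"

definition semi_regular :: "'a set \<Rightarrow> ('a set \<times> ('a \<Rightarrow> 'e::euclidean_space)) set \<Rightarrow>
    ('a vf \<Rightarrow> 'a vf \<Rightarrow> 'a \<Rightarrow> real) \<Rightarrow> bool" where
  "semi_regular M A g \<longleftrightarrow>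
     (\<forall>X\<in>vector_fields M A. \<forall>Y\<in>vector_fields M A. lower_nabla g X Y \<in> annih_d_forms M A g)"

definition riemann :: "'a set \<Rightarrow> ('a set \<times> ('a \<Rightarrow> 'e::euclidean_space)) set \<Rightarrow>
    ('a vf \<Rightarrow> 'a vf \<Rightarrow> 'a \<Rightarrow> real) \<Rightarrow> 'a vf \<Rightarrow> 'a vf \<Rightarrow> 'a vf \<Rightarrow> 'a vf \<Rightarrow> 'a \<Rightarrow> real" where
  "riemann M A g X Y Z T = (\<lambda>p.
      cov_deriv M A g X (lower_nabla g Y Z) T p
    - cov_deriv M A g Y (lower_nabla g X Z) T p
    - lower_nabla g (lie_bracket X Y) Z T p)"

end

theory Submission
  imports Defs
begin

text \<open>Fix \<open>p \<in> M\<close>. Radical-stationarity makes every \<open>\<nabla>\<^sup>\<flat>\<^sub>X Y\<close> at \<open>p\<close> the flat of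
  some vector field, so the term \<open>\<langle>\<langle>\<nabla>\<^sup>\<flat>\<^sub>X T, \<nabla>\<^sup>\<flat>\<^sub>Y Z\<rangle>\<rangle>\<close> of \<open>R(X,Y,Z,T)\<close> at \<open>p\<close>
  is the Koszul form \<open>K(Y, Z, U)\<close> with \<open>U\<^sup>\<flat> = \<nabla>\<^sup>\<flat>\<^sub>X T\<close>, and equally \<open>K(X, T, V)\<close> with
  \<open>V\<^sup>\<flat> = \<nabla>\<^sup>\<flat>\<^sub>Y Z\<close>. Using, for each slot, the evaluation that places that slot in an
  argument where \<open>K\<close> is \<open>C\<^sup>\<infinity>(M)\<close>-linear (first, third) or satisfies the Leibniz rule
  (second), linearity of \<open>R\<close> in \<open>X\<close>, \<open>Y\<close>, \<open>Z\<close> reduces to the classical cancellation of the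
  derivatives of the coefficient. Linearity in \<open>T\<close> and smoothness are immediate because
  semi-regularity makes each \<open>\<nabla>\<^sub>X (\<nabla>\<^sup>\<flat>\<^sub>Y Z)\<close> a smooth 1-form.\<close>

section \<open>Smooth functions on open sets\<close>

text \<open>Since \<open>smooth_on\<close> is coinductive, its closure under sums and products is proved by
  coinduction on the algebra generated by the smooth functions.\<close>

inductive_set smooth_algebra :: "'e::euclidean_space set \<Rightarrow> ('e \<Rightarrow> real) set" for S where
  smooth: "smooth_on S f \<Longrightarrow> f \<in> smooth_algebra S"
| const: "(\<lambda>x. c) \<in> smooth_algebra S"
| add: "f \<in> smooth_algebra S \<Longrightarrow> h \<in> smooth_algebra S \<Longrightarrow> (\<lambda>x. f x + h x) \<in> smooth_algebra S"
| mult: "f \<in> smooth_algebra S \<Longrightarrow> h \<in> smooth_algebra S \<Longrightarrow> (\<lambda>x. f x * h x) \<in> smooth_algebra S"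

lemma smooth_on_imp_continuous_on: "smooth_on S f \<Longrightarrow> continuous_on S f"
  by (erule smooth_on.cases) auto

lemma smooth_on_partial_derivative:
  assumes "smooth_on S f" "i \<in> Basis"
  obtains f' where "\<And>x. x \<in> S \<Longrightarrow> ((\<lambda>t. f (x + t *\<^sub>R i)) has_real_derivative f' x) (at 0)"
    and "smooth_on S f'"
proof -
  from assms(1) have "\<forall>i\<in>Basis. \<exists>f'. (\<forall>x\<in>S. ((\<lambda>t. f (x + t *\<^sub>R i)) has_real_derivative f' x) (at 0))
      \<and> smooth_on S f'"
    by (rule smooth_on.cases) simp
  with assms(2) that show thesis by blast
qed

lemma smooth_algebra_partial_derivative:
  assumes "f \<in> smooth_algebra S" "i \<in> Basis"
  shows "\<exists>f'. (\<forall>x\<in>S. ((\<lambda>t. f (x + t *\<^sub>R i)) has_real_derivative f' x) (at 0))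
              \<and> f' \<in> smooth_algebra S"
  using assms(1)
proof (induction rule: smooth_algebra.induct)
  case (smooth f)
  then show ?case
    using assms(2) by (metis smooth_on_partial_derivative smooth_algebra.smooth)
next
  case (const c)
  show ?case by (rule exI[of _ "\<lambda>x. 0"]) (auto intro: smooth_algebra.const)
next
  case (add f h)
  then obtain f' h' where
      "\<forall>x\<in>S. ((\<lambda>t. f (x + t *\<^sub>R i)) has_real_derivative f' x) (at 0)" "f' \<in> smooth_algebra S"
      "\<forall>x\<in>S. ((\<lambda>t. h (x + t *\<^sub>R i)) has_real_derivative h' x) (at 0)" "h' \<in> smooth_algebra S"
    by blast
  then show ?case
    by (intro exI[of _ "\<lambda>x. f' x + h' x"]) (auto intro: smooth_algebra.add DERIV_add)
next
  case (mult f h)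
  then obtain f' h' where f':
      "\<forall>x\<in>S. ((\<lambda>t. f (x + t *\<^sub>R i)) has_real_derivative f' x) (at 0)" "f' \<in> smooth_algebra S"
    and h': "\<forall>x\<in>S. ((\<lambda>t. h (x + t *\<^sub>R i)) has_real_derivative h' x) (at 0)" "h' \<in> smooth_algebra S"
    by blast
  have "((\<lambda>t. f (x + t *\<^sub>R i) * h (x + t *\<^sub>R i))
      has_real_derivative f' x * h x + h' x * f x) (at 0)" if "x \<in> S" for x
    using DERIV_mult[OF f'(1)[rule_format, OF that] h'(1)[rule_format, OF that]] by simp
  then show ?case
    using f'(2) h'(2) mult.hyps
    by (intro exI[of _ "\<lambda>x. f' x * h x + h' x * f x"])
       (auto intro: smooth_algebra.add smooth_algebra.mult)
qed

lemma smooth_algebra_smooth_on: "f \<in> smooth_algebra S \<Longrightarrow> smooth_on S f"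
proof (coinduction arbitrary: f rule: smooth_on.coinduct)
  case (smooth_on f)
  have "continuous_on S f"
    using smooth_on
    by (induction rule: smooth_algebra.induct)
       (auto intro: smooth_on_imp_continuous_on continuous_on_add continuous_on_mult)
  moreover have "\<exists>f'. (\<forall>x\<in>S. ((\<lambda>t. f (x + t *\<^sub>R i)) has_real_derivative f' x) (at 0))
      \<and> f' \<in> smooth_algebra S" if "i \<in> Basis" for i
    using smooth_algebra_partial_derivative[OF smooth_on that] .
  ultimately show ?case by metis
qed

lemma smooth_on_const: "smooth_on S (\<lambda>x. c)"
  by (rule smooth_algebra_smooth_on smooth_algebra.const)+

lemma smooth_on_add: "smooth_on S f \<Longrightarrow> smooth_on S h \<Longrightarrow> smooth_on S (\<lambda>x. f x + h x)"
  by (rule smooth_algebra_smooth_on) (intro smooth_algebra.add smooth_algebra.smooth)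

lemma smooth_on_mult: "smooth_on S f \<Longrightarrow> smooth_on S h \<Longrightarrow> smooth_on S (\<lambda>x. f x * h x)"
  by (rule smooth_algebra_smooth_on) (intro smooth_algebra.mult smooth_algebra.smooth)

lemma smooth_on_cong:
  assumes "open S" "\<And>x. x \<in> S \<Longrightarrow> f x = h x" "smooth_on S f"
  shows "smooth_on S h"
  using assms(2,3)
proof (coinduction arbitrary: f h rule: smooth_on.coinduct)
  case (smooth_on f h)
  have "continuous_on S h"
    using smooth_on_imp_continuous_on[OF smooth_on(2)] continuous_on_cong smooth_on(1) by blast
  moreover have "\<exists>h'. (\<forall>x\<in>S. ((\<lambda>t. h (x + t *\<^sub>R i)) has_real_derivative h' x) (at 0))
                   \<and> smooth_on S h'" if i: "i \<in> Basis" for i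
  proof -
    obtain f' where f': "\<And>x. x \<in> S \<Longrightarrow> ((\<lambda>t. f (x + t *\<^sub>R i)) has_real_derivative f' x) (at 0)"
      and "smooth_on S f'"
      using smooth_on_partial_derivative[OF smooth_on(2) i] by blast
    have "((\<lambda>t. h (x + t *\<^sub>R i)) has_real_derivative f' x) (at 0)" if x: "x \<in> S" for x
    proof (rule has_field_derivative_transform_within_open[OF f'[OF x]])
      show "open {t. x + t *\<^sub>R i \<in> S}"
        using open_vimage[OF assms(1), of "\<lambda>t. x + t *\<^sub>R i"]
        by (simp add: vimage_def continuous_intros)
    qed (use x smooth_on(1) in auto)
    with \<open>smooth_on S f'\<close> show ?thesis by blast
  qed
  ultimately show ?case by blast
qed

section \<open>Smooth functions and vector fields on an atlas\<close>

locale manifold_fields =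
  fixes M :: "'a set" and A :: "('a set \<times> ('a \<Rightarrow> 'e::euclidean_space)) set"
begin

abbreviation SF where "SF \<equiv> smooth_funs M A"
abbreviation VF where "VF \<equiv> vector_fields M A"

lemma smooth_funsI:
  "(\<And>U \<phi>. (U, \<phi>) \<in> A \<Longrightarrow> smooth_on (\<phi> ` U) (f \<circ> inv_into U \<phi>)) \<Longrightarrow>
   (\<And>p. p \<notin> M \<Longrightarrow> f p = 0) \<Longrightarrow> f \<in> SF"
  unfolding smooth_funs_def by blast

lemma smooth_funs_chart: "f \<in> SF \<Longrightarrow> (U, \<phi>) \<in> A \<Longrightarrow> smooth_on (\<phi> ` U) (f \<circ> inv_into U \<phi>)"
  unfolding smooth_funs_def by blast

lemma smooth_funs_outside: "f \<in> SF \<Longrightarrow> p \<notin> M \<Longrightarrow> f p = 0"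
  unfolding smooth_funs_def by blast

lemma smooth_funs_binop:
  assumes F: "\<And>(S :: 'e set) u v. smooth_on S u \<Longrightarrow> smooth_on S v \<Longrightarrow> smooth_on S (\<lambda>x. F (u x) (v x))"
    and F0: "F 0 0 = 0" and f: "f \<in> SF" and h: "h \<in> SF"
  shows "(\<lambda>p. F (f p) (h p)) \<in> SF"
proof (rule smooth_funsI)
  fix U \<phi> assume "(U, \<phi>) \<in> A"
  from F[OF smooth_funs_chart[OF f this, unfolded comp_def]
      smooth_funs_chart[OF h this, unfolded comp_def]]
  show "smooth_on (\<phi> ` U) ((\<lambda>p. F (f p) (h p)) \<circ> inv_into U \<phi>)"
    by (simp add: comp_def)
qed (simp add: smooth_funs_outside[OF f] smooth_funs_outside[OF h] F0)

lemma smooth_funs_mult [simp]: "f \<in> SF \<Longrightarrow> h \<in> SF \<Longrightarrow> (\<lambda>p. f p * h p) \<in> SF"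
  by (rule smooth_funs_binop[where F = "(*)"]) (auto intro: smooth_on_mult)

lemma smooth_funs_lincomb [simp]: "f \<in> SF \<Longrightarrow> h \<in> SF \<Longrightarrow> (\<lambda>p. a * f p + b * h p) \<in> SF"
  by (rule smooth_funs_binop[where F = "\<lambda>u v. a * u + b * v"])
     (auto intro!: smooth_on_add smooth_on_mult smooth_on_const)

lemma smooth_funs_add [simp]: "f \<in> SF \<Longrightarrow> h \<in> SF \<Longrightarrow> (\<lambda>p. f p + h p) \<in> SF"
  using smooth_funs_lincomb[of f h 1 1] by simp

lemma smooth_funs_diff [simp]: "f \<in> SF \<Longrightarrow> h \<in> SF \<Longrightarrow> (\<lambda>p. f p - h p) \<in> SF"
  using smooth_funs_lincomb[of f h 1 "-1"] by simp

lemma smooth_funs_uminus [simp]: "f \<in> SF \<Longrightarrow> (\<lambda>p. - f p) \<in> SF"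
  using smooth_funs_lincomb[of f f "-1" 0] by simp

lemma smooth_funs_zero [simp]: "(\<lambda>p. 0) \<in> SF"
  by (rule smooth_funsI) (simp_all add: comp_def smooth_on_const)

lemma indicator_smooth_funs:
  assumes "smooth_atlas M A"
  shows "indicator M \<in> SF"
proof (rule smooth_funsI)
  fix U \<phi> assume chart: "(U, \<phi>) \<in> A"
  then have "U \<subseteq> M" "open (\<phi> ` U)"
    using assms unfolding smooth_atlas_def by blast+
  moreover have "indicator M (inv_into U \<phi> x) = 1" if "x \<in> \<phi> ` U" for x
    using inv_into_into[OF that] \<open>U \<subseteq> M\<close> by auto
  ultimately show "smooth_on (\<phi> ` U) (indicator M \<circ> inv_into U \<phi>)"
    by (intro smooth_on_cong[OF _ _ smooth_on_const[of _ 1]]) simp_all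
qed simp

lemma smooth_1form_smooth: "\<omega> \<in> smooth_1forms M A \<Longrightarrow> X \<in> VF \<Longrightarrow> \<omega> X \<in> SF"
  unfolding smooth_1forms_def by blast

lemma smooth_1form_add_scale:
  "\<omega> \<in> smooth_1forms M A \<Longrightarrow> f \<in> SF \<Longrightarrow> X \<in> VF \<Longrightarrow> X' \<in> VF \<Longrightarrow>
   \<omega> (vf_add (vf_scale f X) X') p = f p * \<omega> X p + \<omega> X' p"
  unfolding smooth_1forms_def by auto

lemma vector_field_smooth [simp]: "X \<in> VF \<Longrightarrow> f \<in> SF \<Longrightarrow> X f \<in> SF"
  unfolding vector_fields_def by blast

lemma vector_field_nonsmooth: "X \<in> VF \<Longrightarrow> f \<notin> SF \<Longrightarrow> X f = (\<lambda>_. 0)"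
  unfolding vector_fields_def by blast

lemma vector_field_lincomb:
  "X \<in> VF \<Longrightarrow> f \<in> SF \<Longrightarrow> h \<in> SF \<Longrightarrow> X (\<lambda>p. a * f p + b * h p) = (\<lambda>p. a * X f p + b * X h p)"
  unfolding vector_fields_def by blast

lemma vector_field_mult:
  "X \<in> VF \<Longrightarrow> f \<in> SF \<Longrightarrow> h \<in> SF \<Longrightarrow> X (\<lambda>p. f p * h p) = (\<lambda>p. f p * X h p + h p * X f p)"
  unfolding vector_fields_def by blast

lemma vector_field_add:
  "X \<in> VF \<Longrightarrow> f \<in> SF \<Longrightarrow> h \<in> SF \<Longrightarrow> X (\<lambda>p. f p + h p) = (\<lambda>p. X f p + X h p)"
  using vector_field_lincomb[of X f h 1 1] by simp

lemma vector_field_zero: "X \<in> VF \<Longrightarrow> X (\<lambda>p. 0) = (\<lambda>p. 0)"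
  using vector_field_lincomb[of X "\<lambda>p. 0" "\<lambda>p. 0" 0 0] by simp

lemma vector_field_outside: "X \<in> VF \<Longrightarrow> p \<notin> M \<Longrightarrow> X f p = 0"
  by (cases "f \<in> SF") (auto simp: smooth_funs_outside vector_field_nonsmooth)

lemma vector_fields_zero: "(\<lambda>_ _. 0) \<in> VF"
  unfolding vector_fields_def by simp

lemma vector_fields_add_scale [simp]:
  assumes f: "f \<in> SF" and X: "X \<in> VF" and X': "X' \<in> VF"
  shows "vf_add (vf_scale f X) X' \<in> VF"
  unfolding vector_fields_def vf_add_def vf_scale_def
proof (intro CollectI conjI ballI allI impI)
  fix h assume "h \<notin> SF"
  then show "(\<lambda>p. f p * X h p + X' h p) = (\<lambda>_. 0)"
    using X X' by (simp add: vector_field_nonsmooth)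
next
  fix h1 h2 a b assume "h1 \<in> SF" "h2 \<in> SF"
  then show "(\<lambda>p. f p * X (\<lambda>p. a * h1 p + b * h2 p) p + X' (\<lambda>p. a * h1 p + b * h2 p) p) =
             (\<lambda>p. a * (f p * X h1 p + X' h1 p) + b * (f p * X h2 p + X' h2 p))"
    using X X' by (simp add: vector_field_lincomb[OF X] vector_field_lincomb[OF X'] algebra_simps)
next
  fix h1 h2 assume "h1 \<in> SF" "h2 \<in> SF"
  then show "(\<lambda>p. f p * X (\<lambda>p. h1 p * h2 p) p + X' (\<lambda>p. h1 p * h2 p) p) =
             (\<lambda>p. h1 p * (f p * X h2 p + X' h2 p) + h2 p * (f p * X h1 p + X' h1 p))"
    using X X' by (simp add: vector_field_mult[OF X] vector_field_mult[OF X'] algebra_simps)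
qed (use f X X' in simp)

lemma vector_fields_lie_bracket [simp]:
  assumes X: "X \<in> VF" and Y: "Y \<in> VF"
  shows "lie_bracket X Y \<in> VF"
  unfolding vector_fields_def lie_bracket_def
proof (intro CollectI conjI ballI allI impI)
  fix h assume "h \<notin> SF"
  then show "(\<lambda>p. X (Y h) p - Y (X h) p) = (\<lambda>_. 0)"
    using X Y by (simp add: vector_field_nonsmooth vector_field_zero)
next
  fix h1 h2 a b assume "h1 \<in> SF" "h2 \<in> SF"
  then show "(\<lambda>p. X (Y (\<lambda>p. a * h1 p + b * h2 p)) p - Y (X (\<lambda>p. a * h1 p + b * h2 p)) p) =
             (\<lambda>p. a * (X (Y h1) p - Y (X h1) p) + b * (X (Y h2) p - Y (X h2) p))"
    using X Y by (simp add: vector_field_lincomb[OF X] vector_field_lincomb[OF Y] algebra_simps)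
next
  fix h1 h2 assume "h1 \<in> SF" "h2 \<in> SF"
  then show "(\<lambda>p. X (Y (\<lambda>p. h1 p * h2 p)) p - Y (X (\<lambda>p. h1 p * h2 p)) p) =
             (\<lambda>p. h1 p * (X (Y h2) p - Y (X h2) p) + h2 p * (X (Y h1) p - Y (X h1) p))"
    using X Y
    by (simp add: vector_field_mult[OF X] vector_field_mult[OF Y] vector_field_add[OF X]
        vector_field_add[OF Y] algebra_simps)
qed (use X Y in simp)

lemma lie_bracket_add_scale_left:
  assumes "f \<in> SF" "X \<in> VF" "X' \<in> VF" "Y \<in> VF"
  shows "lie_bracket (vf_add (vf_scale f X) X') Y =
    vf_add (vf_scale f (lie_bracket X Y)) (vf_add (vf_scale (\<lambda>p. - Y f p) X) (lie_bracket X' Y))"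
proof (intro ext)
  fix h p
  show "lie_bracket (vf_add (vf_scale f X) X') Y h p =
    vf_add (vf_scale f (lie_bracket X Y))
      (vf_add (vf_scale (\<lambda>p. - Y f p) X) (lie_bracket X' Y)) h p"
    using assms
    by (cases "h \<in> SF")
       (simp_all add: lie_bracket_def vf_add_def vf_scale_def vector_field_add[OF \<open>Y \<in> VF\<close>]
         vector_field_mult[OF \<open>Y \<in> VF\<close>] vector_field_nonsmooth vector_field_zero algebra_simps)
qed

lemma lie_bracket_add_scale_right:
  assumes "f \<in> SF" "X \<in> VF" "X' \<in> VF" "Y \<in> VF"
  shows "lie_bracket Y (vf_add (vf_scale f X) X') =
    vf_add (vf_scale f (lie_bracket Y X)) (vf_add (vf_scale (Y f) X) (lie_bracket Y X'))"
proof (intro ext)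
  fix h p
  show "lie_bracket Y (vf_add (vf_scale f X) X') h p =
    vf_add (vf_scale f (lie_bracket Y X)) (vf_add (vf_scale (Y f) X) (lie_bracket Y X')) h p"
    using assms
    by (cases "h \<in> SF")
       (simp_all add: lie_bracket_def vf_add_def vf_scale_def vector_field_add[OF \<open>Y \<in> VF\<close>]
         vector_field_mult[OF \<open>Y \<in> VF\<close>] vector_field_nonsmooth vector_field_zero algebra_simps)
qed

end

section \<open>Singular semi-Riemannian metrics and the Koszul form\<close>

locale singular_semi_riemannian = manifold_fields M A
  for M :: "'a set" and A :: "('a set \<times> ('a \<Rightarrow> 'e::euclidean_space)) set" +
  fixes g :: "'a vf \<Rightarrow> 'a vf \<Rightarrow> 'a \<Rightarrow> real"
  assumes atlas: "smooth_atlas M A"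
    and metric: "smooth_sym_form M A g"
begin

lemma metric_smooth [simp]: "X \<in> VF \<Longrightarrow> Y \<in> VF \<Longrightarrow> g X Y \<in> SF"
  using metric unfolding smooth_sym_form_def by blast

lemma metric_commute: "X \<in> VF \<Longrightarrow> Y \<in> VF \<Longrightarrow> g X Y = g Y X"
  using metric unfolding smooth_sym_form_def by blast

lemma metric_add_scale_left:
  "f \<in> SF \<Longrightarrow> X \<in> VF \<Longrightarrow> X' \<in> VF \<Longrightarrow> Y \<in> VF \<Longrightarrow>
   g (vf_add (vf_scale f X) X') Y = (\<lambda>p. f p * g X Y p + g X' Y p)"
  using metric unfolding smooth_sym_form_def by blast

lemma metric_add_scale_right:
  "f \<in> SF \<Longrightarrow> X \<in> VF \<Longrightarrow> X' \<in> VF \<Longrightarrow> Y \<in> VF \<Longrightarrow>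
   g Y (vf_add (vf_scale f X) X') = (\<lambda>p. f p * g Y X p + g Y X' p)"
  by (simp add: metric_commute[of Y] metric_add_scale_left)

text \<open>The constant \<open>1\<close> is not in \<open>C\<^sup>\<infinity>(M)\<close> unless \<open>M\<close> is the whole type, so the
  identity is obtained from \<open>C\<^sup>\<infinity>(M)\<close>-linearity by scaling with the indicator of \<open>M\<close>.\<close>

lemma metric_zero_field:
  assumes Y: "Y \<in> VF"
  shows "g (\<lambda>_ _. 0) Y p = 0"
proof (cases "p \<in> M")
  case True
  have "vf_add (vf_scale (indicator M) (\<lambda>_ _. 0)) (\<lambda>_ _. 0) = (\<lambda>_ _. 0)"
    by (simp add: vf_add_def vf_scale_def)
  then have "g (\<lambda>_ _. 0) Y p = indicator M p * g (\<lambda>_ _. 0) Y p + g (\<lambda>_ _. 0) Y p"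
    using metric_add_scale_left[OF indicator_smooth_funs[OF atlas] vector_fields_zero
        vector_fields_zero Y]
    by metis
  with True show ?thesis by simp
qed (use Y in \<open>simp add: smooth_funs_outside vector_fields_zero\<close>)

lemma metric_lie_bracket_swap:
  assumes X: "X \<in> VF" and Y: "Y \<in> VF" and V: "V \<in> VF"
  shows "g V (lie_bracket Y X) p = - g V (lie_bracket X Y) p"
proof (cases "p \<in> M")
  case True
  have "vf_add (vf_scale (indicator M) (lie_bracket X Y)) (lie_bracket Y X) = (\<lambda>_ _. 0)"
    using X Y
    by (intro ext) (simp add: vf_add_def vf_scale_def lie_bracket_def indicator_def vector_field_outside)
  then have "0 = indicator M p * g V (lie_bracket X Y) p + g V (lie_bracket Y X) p"
    using metric_add_scale_right[OF indicator_smooth_funs[OF atlas],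
        of "lie_bracket X Y" "lie_bracket Y X" V]
      metric_zero_field[OF V] metric_commute[OF V vector_fields_zero] X Y V
    by simp
  with True show ?thesis by simp
qed (use X Y V in \<open>simp add: smooth_funs_outside\<close>)

text \<open>A vector field whose flat is \<open>\<omega>\<close> at \<open>p\<close>; it is determined only up to the radical at
  \<open>p\<close>, and is an arbitrary choice unless \<open>\<omega> \<in> annih_forms M A g\<close>.\<close>

definition sharp :: "'a form1 \<Rightarrow> 'a \<Rightarrow> 'a vf" where
  "sharp \<omega> p = (SOME U. U \<in> VF \<and> (\<forall>Y\<in>VF. \<omega> Y p = g U Y p))"

lemma sharp:
  assumes "\<omega> \<in> annih_forms M A g" "p \<in> M"
  shows sharp_vector_field: "sharp \<omega> p \<in> VF"
    and flat_sharp: "Y \<in> VF \<Longrightarrow> \<omega> Y p = g (sharp \<omega> p) Y p"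
proof -
  from assms have "\<exists>U. U \<in> VF \<and> (\<forall>Y\<in>VF. \<omega> Y p = g U Y p)"
    unfolding annih_forms_def in_annih_at_def by blast
  then have "sharp \<omega> p \<in> VF \<and> (\<forall>Y\<in>VF. \<omega> Y p = g (sharp \<omega> p) Y p)"
    unfolding sharp_def by (rule someI_ex)
  then show "sharp \<omega> p \<in> VF" "Y \<in> VF \<Longrightarrow> \<omega> Y p = g (sharp \<omega> p) Y p"
    by blast+
qed

lemma annih_inner_sharp: "annih_inner M A g \<alpha> \<omega> p = g (sharp \<alpha> p) (sharp \<omega> p) p"
  unfolding annih_inner_def sharp_def ..

lemma annih_inner_apply_left:
  assumes "\<alpha> \<in> annih_forms M A g" "\<omega> \<in> annih_forms M A g" "p \<in> M"
  shows "annih_inner M A g \<alpha> \<omega> p = \<alpha> (sharp \<omega> p) p"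
  using assms by (simp add: annih_inner_sharp flat_sharp sharp_vector_field)

lemma annih_inner_apply_right:
  assumes "\<alpha> \<in> annih_forms M A g" "\<omega> \<in> annih_forms M A g" "p \<in> M"
  shows "annih_inner M A g \<alpha> \<omega> p = \<omega> (sharp \<alpha> p) p"
  using assms by (simp add: annih_inner_sharp flat_sharp sharp_vector_field metric_commute)

lemma koszul_metric_compat:
  assumes X: "X \<in> VF" and Y: "Y \<in> VF" and Z: "Z \<in> VF"
  shows "koszul g X Y Z p + koszul g X Z Y p = X (g Y Z) p"
  unfolding koszul_def metric_commute[OF Z Y] metric_commute[OF Y X] metric_commute[OF X Z]
    metric_lie_bracket_swap[OF Y Z X] metric_lie_bracket_swap[OF X Y Z]
    metric_lie_bracket_swap[OF Z X Y]
  by (simp add: field_simps)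

lemma koszul_add_scale_first:
  assumes f: "f \<in> SF" and X: "X \<in> VF" and X': "X' \<in> VF" and Y: "Y \<in> VF" and Z: "Z \<in> VF"
  shows "koszul g (vf_add (vf_scale f X) X') Y Z = (\<lambda>p. f p * koszul g X Y Z p + koszul g X' Y Z p)"
proof (rule ext)
  fix p
  define W where "W = vf_add (vf_scale f X) X'"
  have W: "W \<in> VF" using f X X' by (simp add: W_def)
  have "W (g Y Z) p = f p * X (g Y Z) p + X' (g Y Z) p"
    by (simp add: W_def vf_add_def vf_scale_def)
  moreover have "Y (g Z W) p = f p * Y (g X Z) p + g X Z p * Y f p + Y (g X' Z) p"
    using f X X' Y Z
    by (simp add: W_def metric_commute[OF Z] metric_add_scale_left vector_field_add[OF Y]
        vector_field_mult[OF Y])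
  moreover have "Z (g W Y) p = f p * Z (g X Y) p + g X Y p * Z f p + Z (g X' Y) p"
    using f X X' Y Z
    by (simp add: W_def metric_add_scale_left vector_field_add[OF Z] vector_field_mult[OF Z])
  moreover have "g W (lie_bracket Y Z) p = f p * g X (lie_bracket Y Z) p + g X' (lie_bracket Y Z) p"
    using f X X' Y Z by (simp add: W_def metric_add_scale_left)
  moreover have "g Y (lie_bracket Z W) p
      = f p * g Y (lie_bracket Z X) p + Z f p * g X Y p + g Y (lie_bracket Z X') p"
    using f X X' Y Z
    by (simp add: W_def lie_bracket_add_scale_right metric_add_scale_right metric_commute[OF X Y])
  moreover have "g Z (lie_bracket W Y) p
      = f p * g Z (lie_bracket X Y) p - Y f p * g X Z p + g Z (lie_bracket X' Y) p"
    using f X X' Y Z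
    by (simp add: W_def lie_bracket_add_scale_left metric_add_scale_right metric_commute[OF X Z])
  ultimately have "koszul g W Y Z p = f p * koszul g X Y Z p + koszul g X' Y Z p"
    unfolding koszul_def
    using metric_commute[OF Z X] metric_commute[OF Z X'] metric_commute[OF X Y]
      metric_commute[OF X' Y]
    by (simp add: field_simps)
  then show "koszul g (vf_add (vf_scale f X) X') Y Z p = f p * koszul g X Y Z p + koszul g X' Y Z p"
    by (simp add: W_def)
qed

end

section \<open>Tensoriality of the Riemann curvature\<close>

locale radical_stationary_manifold = singular_semi_riemannian +
  assumes radical_stationary: "radical_stationary M A g"
begin

lemma lower_nabla_annih_forms: "X \<in> VF \<Longrightarrow> Y \<in> VF \<Longrightarrow> lower_nabla g X Y \<in> annih_forms M A g"
  using radical_stationary unfolding radical_stationary_def by blast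

lemma lower_nabla_smooth_1form: "X \<in> VF \<Longrightarrow> Y \<in> VF \<Longrightarrow> lower_nabla g X Y \<in> smooth_1forms M A"
  using lower_nabla_annih_forms unfolding annih_forms_def by blast

lemma lower_nabla_apply: "lower_nabla g X Y Z = koszul g X Y Z"
  by (simp add: lower_nabla_def)

lemma koszul_smooth [simp]: "X \<in> VF \<Longrightarrow> Y \<in> VF \<Longrightarrow> Z \<in> VF \<Longrightarrow> koszul g X Y Z \<in> SF"
  using smooth_1form_smooth[OF lower_nabla_smooth_1form] by (simp add: lower_nabla_apply)

lemma koszul_add_scale_third:
  assumes "f \<in> SF" "X \<in> VF" "Y \<in> VF" "Z \<in> VF" "Z' \<in> VF"
  shows "koszul g X Y (vf_add (vf_scale f Z) Z') = (\<lambda>p. f p * koszul g X Y Z p + koszul g X Y Z' p)"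
  using smooth_1form_add_scale[OF lower_nabla_smooth_1form[of X Y]] assms
  by (auto simp: lower_nabla_apply)

lemma koszul_add_scale_second:
  assumes f: "f \<in> SF" and X: "X \<in> VF" and Y: "Y \<in> VF" and Y': "Y' \<in> VF" and Z: "Z \<in> VF"
  shows "koszul g X (vf_add (vf_scale f Y) Y') Z
    = (\<lambda>p. f p * koszul g X Y Z p + X f p * g Y Z p + koszul g X Y' Z p)"
proof (rule ext)
  fix p
  define W where "W = vf_add (vf_scale f Y) Y'"
  have W: "W \<in> VF" using f Y Y' by (simp add: W_def)
  have "koszul g X W Z p = X (g W Z) p - koszul g X Z W p"
    using koszul_metric_compat[OF X W Z, of p] by linarith
  also have "X (g W Z) p = f p * X (g Y Z) p + g Y Z p * X f p + X (g Y' Z) p"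
    using f X Y Y' Z
    by (simp add: W_def metric_add_scale_left vector_field_add[OF X] vector_field_mult[OF X])
  also have "koszul g X Z W p = f p * koszul g X Z Y p + koszul g X Z Y' p"
    using koszul_add_scale_third[OF f X Z Y Y'] by (simp add: W_def)
  finally show "koszul g X (vf_add (vf_scale f Y) Y') Z p
      = f p * koszul g X Y Z p + X f p * g Y Z p + koszul g X Y' Z p"
    by (simp add: W_def algebra_simps
        flip: koszul_metric_compat[OF X Y Z, of p] koszul_metric_compat[OF X Y' Z, of p])
qed

lemma metric_sharp_lower_nabla:
  "X \<in> VF \<Longrightarrow> Y \<in> VF \<Longrightarrow> Z \<in> VF \<Longrightarrow> p \<in> M \<Longrightarrow>
   g Z (sharp (lower_nabla g X Y) p) p = koszul g X Y Z p"
  using flat_sharp[OF lower_nabla_annih_forms, of X Y p Z]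
    metric_commute[of Z "sharp (lower_nabla g X Y) p"]
    sharp_vector_field[OF lower_nabla_annih_forms]
  by (simp add: lower_nabla_apply)

lemma koszul_sharp_commute:
  "X \<in> VF \<Longrightarrow> Y \<in> VF \<Longrightarrow> Z \<in> VF \<Longrightarrow> T \<in> VF \<Longrightarrow> p \<in> M \<Longrightarrow>
   koszul g Y Z (sharp (lower_nabla g X T) p) p = koszul g X T (sharp (lower_nabla g Y Z) p) p"
  using annih_inner_apply_left[OF lower_nabla_annih_forms[of X T] lower_nabla_annih_forms[of Y Z]]
    annih_inner_apply_right[OF lower_nabla_annih_forms[of X T] lower_nabla_annih_forms[of Y Z]]
  by (simp add: lower_nabla_apply)

lemma riemann_koszul:
  "X \<in> VF \<Longrightarrow> Y \<in> VF \<Longrightarrow> Z \<in> VF \<Longrightarrow> T \<in> VF \<Longrightarrow> p \<in> M \<Longrightarrow>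
   riemann M A g X Y Z T p
     = X (koszul g Y Z T) p - koszul g Y Z (sharp (lower_nabla g X T) p) p
       - (Y (koszul g X Z T) p - koszul g X Z (sharp (lower_nabla g Y T) p) p)
       - koszul g (lie_bracket X Y) Z T p"
  unfolding riemann_def cov_deriv_def
  by (simp add: annih_inner_apply_right[OF lower_nabla_annih_forms lower_nabla_annih_forms]
      lower_nabla_apply)

lemma riemann_add_scale_first:
  assumes f: "f \<in> SF" and X: "X \<in> VF" and X': "X' \<in> VF"
    and Y: "Y \<in> VF" and Z: "Z \<in> VF" and T: "T \<in> VF" and p: "p \<in> M"
  shows "riemann M A g (vf_add (vf_scale f X) X') Y Z T p
    = f p * riemann M A g X Y Z T p + riemann M A g X' Y Z T p"
proof -
  define W where "W = vf_add (vf_scale f X) X'"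
  define U where "U = sharp (lower_nabla g Y T) p"
  define V where "V = sharp (lower_nabla g Y Z) p"
  have W: "W \<in> VF" and U: "U \<in> VF" and V: "V \<in> VF"
    using f X X' Y Z T p
    by (simp_all add: W_def U_def V_def sharp_vector_field lower_nabla_annih_forms)
  have expand: "riemann M A g Q Y Z T p
      = Q (koszul g Y Z T) p - koszul g Q T V p - (Y (koszul g Q Z T) p - koszul g Q Z U p)
        - koszul g (lie_bracket Q Y) Z T p" if "Q \<in> VF" for Q
    using riemann_koszul[OF that Y Z T p] koszul_sharp_commute[OF that Y Z T p]
    by (simp add: U_def V_def)
  have "W (koszul g Y Z T) p = f p * X (koszul g Y Z T) p + X' (koszul g Y Z T) p"
    by (simp add: W_def vf_add_def vf_scale_def)
  moreover have "Y (koszul g W Z T) p = f p * Y (koszul g X Z T) p + koszul g X Z T p * Y f p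
      + Y (koszul g X' Z T) p"
    using f X X' Y Z T
    by (simp add: W_def koszul_add_scale_first vector_field_add[OF Y] vector_field_mult[OF Y])
  moreover have "koszul g (lie_bracket W Y) Z T p = f p * koszul g (lie_bracket X Y) Z T p
      - Y f p * koszul g X Z T p + koszul g (lie_bracket X' Y) Z T p"
    using f X X' Y Z T by (simp add: W_def lie_bracket_add_scale_left koszul_add_scale_first)
  ultimately have "riemann M A g W Y Z T p
      = f p * riemann M A g X Y Z T p + riemann M A g X' Y Z T p"
    unfolding expand[OF W] expand[OF X] expand[OF X']
    using f X X' Y Z T U V
    by (simp add: W_def koszul_add_scale_first algebra_simps)
  then show ?thesis by (simp add: W_def)
qed

lemma riemann_add_scale_second:
  assumes f: "f \<in> SF" and X: "X \<in> VF" and Y: "Y \<in> VF" and Y': "Y' \<in> VF"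
    and Z: "Z \<in> VF" and T: "T \<in> VF" and p: "p \<in> M"
  shows "riemann M A g X (vf_add (vf_scale f Y) Y') Z T p
    = f p * riemann M A g X Y Z T p + riemann M A g X Y' Z T p"
proof -
  define W where "W = vf_add (vf_scale f Y) Y'"
  define U where "U = sharp (lower_nabla g X T) p"
  define V where "V = sharp (lower_nabla g X Z) p"
  have W: "W \<in> VF" and U: "U \<in> VF" and V: "V \<in> VF"
    using f X Y Y' Z T p
    by (simp_all add: W_def U_def V_def sharp_vector_field lower_nabla_annih_forms)
  have expand: "riemann M A g X Q Z T p
      = X (koszul g Q Z T) p - koszul g Q Z U p - (Q (koszul g X Z T) p - koszul g Q T V p)
        - koszul g (lie_bracket X Q) Z T p" if "Q \<in> VF" for Q
    using riemann_koszul[OF X that Z T p] koszul_sharp_commute[OF that X Z T p]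
    by (simp add: U_def V_def)
  have "X (koszul g W Z T) p = f p * X (koszul g Y Z T) p + koszul g Y Z T p * X f p
      + X (koszul g Y' Z T) p"
    using f X Y Y' Z T
    by (simp add: W_def koszul_add_scale_first vector_field_add[OF X] vector_field_mult[OF X])
  moreover have "W (koszul g X Z T) p = f p * Y (koszul g X Z T) p + Y' (koszul g X Z T) p"
    by (simp add: W_def vf_add_def vf_scale_def)
  moreover have "koszul g (lie_bracket X W) Z T p = f p * koszul g (lie_bracket X Y) Z T p
      + X f p * koszul g Y Z T p + koszul g (lie_bracket X Y') Z T p"
    using f X Y Y' Z T by (simp add: W_def lie_bracket_add_scale_right koszul_add_scale_first)
  ultimately have "riemann M A g X W Z T p
      = f p * riemann M A g X Y Z T p + riemann M A g X Y' Z T p"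
    unfolding expand[OF W] expand[OF Y] expand[OF Y']
    using f X Y Y' Z T U V
    by (simp add: W_def koszul_add_scale_first algebra_simps)
  then show ?thesis by (simp add: W_def)
qed

lemma riemann_add_scale_third:
  assumes f: "f \<in> SF" and X: "X \<in> VF" and Y: "Y \<in> VF" and Z: "Z \<in> VF" and Z': "Z' \<in> VF"
    and T: "T \<in> VF" and p: "p \<in> M"
  shows "riemann M A g X Y (vf_add (vf_scale f Z) Z') T p
    = f p * riemann M A g X Y Z T p + riemann M A g X Y Z' T p"
proof -
  define W where "W = vf_add (vf_scale f Z) Z'"
  define U where "U = sharp (lower_nabla g X T) p"
  define V where "V = sharp (lower_nabla g Y T) p"
  have W: "W \<in> VF" and U: "U \<in> VF" and V: "V \<in> VF"
    using f X Y Z Z' T p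
    by (simp_all add: W_def U_def V_def sharp_vector_field lower_nabla_annih_forms)
  have expand: "riemann M A g X Y Q T p
      = X (koszul g Y Q T) p - koszul g Y Q U p - (Y (koszul g X Q T) p - koszul g X Q V p)
        - koszul g (lie_bracket X Y) Q T p" if "Q \<in> VF" for Q
    using riemann_koszul[OF X Y that T p] by (simp add: U_def V_def)
  have "X (koszul g Y W T) p = f p * X (koszul g Y Z T) p + koszul g Y Z T p * X f p
      + Y f p * (koszul g X Z T p + koszul g X T Z p) + g Z T p * X (Y f) p + X (koszul g Y Z' T) p"
    using f X Y Z Z' T
    by (simp add: W_def koszul_add_scale_second vector_field_add[OF X] vector_field_mult[OF X]
        koszul_metric_compat metric_commute[OF T Z] algebra_simps)
  moreover have "Y (koszul g X W T) p = f p * Y (koszul g X Z T) p + koszul g X Z T p * Y f p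
      + X f p * (koszul g Y Z T p + koszul g Y T Z p) + g Z T p * Y (X f) p + Y (koszul g X Z' T) p"
    using f X Y Z Z' T
    by (simp add: W_def koszul_add_scale_second vector_field_add[OF Y] vector_field_mult[OF Y]
        koszul_metric_compat metric_commute[OF T Z] algebra_simps)
  moreover have "koszul g Y W U p
      = f p * koszul g Y Z U p + Y f p * koszul g X T Z p + koszul g Y Z' U p"
    using f Y Z Z' U metric_sharp_lower_nabla[OF X T Z p]
    by (simp add: W_def U_def koszul_add_scale_second)
  moreover have "koszul g X W V p
      = f p * koszul g X Z V p + X f p * koszul g Y T Z p + koszul g X Z' V p"
    using f X Z Z' V metric_sharp_lower_nabla[OF Y T Z p]
    by (simp add: W_def V_def koszul_add_scale_second)
  moreover have "koszul g (lie_bracket X Y) W T p = f p * koszul g (lie_bracket X Y) Z T p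
      + (X (Y f) p - Y (X f) p) * g Z T p + koszul g (lie_bracket X Y) Z' T p"
    using koszul_add_scale_second[OF f vector_fields_lie_bracket[OF X Y] Z Z' T]
    by (simp add: W_def lie_bracket_def)
  ultimately have "riemann M A g X Y W T p
      = f p * riemann M A g X Y Z T p + riemann M A g X Y Z' T p"
    unfolding expand[OF W] expand[OF Z] expand[OF Z']
    by (simp add: algebra_simps)
  then show ?thesis by (simp add: W_def)
qed

end

locale semi_regular_manifold = radical_stationary_manifold +
  assumes semi_regular: "semi_regular M A g"
begin

lemma cov_deriv_lower_nabla_smooth_1form:
  "X \<in> VF \<Longrightarrow> Y \<in> VF \<Longrightarrow> Z \<in> VF \<Longrightarrow> cov_deriv M A g Z (lower_nabla g X Y) \<in> smooth_1forms M A"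
  using semi_regular unfolding semi_regular_def annih_d_forms_def annih_forms_def by blast

lemma riemann_add_scale_fourth:
  assumes "f \<in> SF" "X \<in> VF" "Y \<in> VF" "Z \<in> VF" "T \<in> VF" "T' \<in> VF"
  shows "riemann M A g X Y Z (vf_add (vf_scale f T) T') p
    = f p * riemann M A g X Y Z T p + riemann M A g X Y Z T' p"
  using assms
  by (simp add: riemann_def algebra_simps
      smooth_1form_add_scale[OF cov_deriv_lower_nabla_smooth_1form]
      smooth_1form_add_scale[OF lower_nabla_smooth_1form])

lemma riemann_smooth:
  assumes "X \<in> VF" "Y \<in> VF" "Z \<in> VF" "T \<in> VF"
  shows "riemann M A g X Y Z T \<in> SF"
  unfolding riemann_def
  using assms
  by (intro smooth_funs_diff smooth_1form_smooth[OF cov_deriv_lower_nabla_smooth_1form]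
      smooth_1form_smooth[OF lower_nabla_smooth_1form] vector_fields_lie_bracket)

end

lemma semi_regular_imp_radical_stationary: "semi_regular M A g \<Longrightarrow> radical_stationary M A g"
  unfolding semi_regular_def radical_stationary_def annih_d_forms_def by blast

theorem theorem7p5:
  fixes M :: "'a set" and A :: "('a set \<times> ('a \<Rightarrow> 'e::euclidean_space)) set"
    and g :: "'a vf \<Rightarrow> 'a vf \<Rightarrow> 'a \<Rightarrow> real"
  assumes "smooth_manifold M A"
    and "smooth_sym_form M A g"
    and "semi_regular M A g"
  shows "(\<forall>X\<in>vector_fields M A. \<forall>Y\<in>vector_fields M A. \<forall>Z\<in>vector_fields M A.
           \<forall>T\<in>vector_fields M A. riemann M A g X Y Z T \<in> smooth_funs M A) \<and>
        (\<forall>f\<in>smooth_funs M A. \<forall>X\<in>vector_fields M A. \<forall>X'\<in>vector_fields M A.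
         \<forall>Y\<in>vector_fields M A. \<forall>Z\<in>vector_fields M A. \<forall>T\<in>vector_fields M A. \<forall>p\<in>M.
           riemann M A g (vf_add (vf_scale f X) X') Y Z T p
             = f p * riemann M A g X Y Z T p + riemann M A g X' Y Z T p) \<and>
        (\<forall>f\<in>smooth_funs M A. \<forall>X\<in>vector_fields M A. \<forall>Y\<in>vector_fields M A.
         \<forall>Y'\<in>vector_fields M A. \<forall>Z\<in>vector_fields M A. \<forall>T\<in>vector_fields M A. \<forall>p\<in>M.
           riemann M A g X (vf_add (vf_scale f Y) Y') Z T p
             = f p * riemann M A g X Y Z T p + riemann M A g X Y' Z T p) \<and>
        (\<forall>f\<in>smooth_funs M A. \<forall>X\<in>vector_fields M A. \<forall>Y\<in>vector_fields M A.
         \<forall>Z\<in>vector_fields M A. \<forall>Z'\<in>vector_fields M A. \<forall>T\<in>vector_fields M A. \<forall>p\<in>M.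
           riemann M A g X Y (vf_add (vf_scale f Z) Z') T p
             = f p * riemann M A g X Y Z T p + riemann M A g X Y Z' T p) \<and>
        (\<forall>f\<in>smooth_funs M A. \<forall>X\<in>vector_fields M A. \<forall>Y\<in>vector_fields M A.
         \<forall>Z\<in>vector_fields M A. \<forall>T\<in>vector_fields M A. \<forall>T'\<in>vector_fields M A. \<forall>p\<in>M.
           riemann M A g X Y Z (vf_add (vf_scale f T) T') p
             = f p * riemann M A g X Y Z T p + riemann M A g X Y Z T' p)"
proof -
  interpret semi_regular_manifold M A g
  proof
    show "smooth_atlas M A"
      using \<open>smooth_manifold M A\<close> unfolding smooth_manifold_def by blast
    show "radical_stationary M A g"
      using \<open>semi_regular M A g\<close> by (rule semi_regular_imp_radical_stationary)
  qed fact+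
  show ?thesis
    by (simp add: riemann_smooth riemann_add_scale_first riemann_add_scale_second
        riemann_add_scale_third riemann_add_scale_fourth)
qed

end
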